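(* For every disjunctive program $P$ the following are equivalent: (1) $P$ is finitely recursive; (2) $P$ has a smooth splitting sequence of length $\mu\le\omega$.
   Context: A disjunctive program is a set of rules $A_1\vee\dots\vee A_m\leftarrow L_1,\dots,L_n$ ($m>0$, $n\ge0$), $A_j$ atoms, $L_i$ atoms or negated atoms $\mathtt{not}\,A$, possibly with function symbols; $head(r)=\{A_1,\dots,A_m\}$; $\mathsf{Ground}(P)$ is its ground instantiation and $\mathit{atom}(r)$, $\mathit{atom}(\mathsf{Ground}(P))$ denote the sets of ground atoms occurring in $r$, resp. in $\mathsf{Ground}(P)$. The dependency graph of $P$ has ground atoms as vertices and an edge $A\to B$ whenever for some $r\in\mathsf{Ground}(P)$, $A\in head(r)$ and $B$ occurs in $r$ (body, positive or negated, or head). $A$ depends on $B$ if there is a directed path from $A$ to $B$ (every atom depends on itself). $P$ is finitely recursive iff every ground atom depends on finitely many ground atoms. A splitting set of $P$ is a set $U$ of ground atoms such that for all $r\in\mathsf{Ground}(P)$, $head(r)\cap U\ne\emptyset$ implies $\mathit{atom}(r)\subseteq U$. A (transfinite) sequence is a family indexed by $\{\alpha:\alpha<\mu\}$ for an ordinal $\mu$ (its length). A splitting sequence for $P$ is a sequence $\langle U_\alpha\rangle_{\alpha<\mu}$ of splitting sets of $P$ that is monotone ($U_\alpha\subseteq U_\beta$ for $\alpha<\beta$), continuous ($U_\lambda=\bigcup_{\nu<\lambda}U_\nu$ for limit $\lambda<\mu$), and satisfies $\bigcup_{\alpha<\mu}U_\alpha=\mathit{atom}(\mathsf{Ground}(P))$.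 A sequence $\langle X_\alpha\rangle_{\alpha<\mu}$ is smooth iff $X_0$ is finite and $X_{\alpha+1}\setminus X_\alpha$ is finite for every $\alpha+1<\mu$. *)

theory Defs
  imports Main "HOL-Library.Countable" "HOL-Library.Extended_Nat"
begin

datatype ('f, 'v) trm = Var 'v | Fn 'f "('f, 'v) trm list"

type_synonym ('p, 'f, 'v) atm = "'p \<times> ('f, 'v) trm list"

datatype 'a lit = Pos 'a | Neg 'a

fun lit_atom :: "'a lit \<Rightarrow> 'a" where
  "lit_atom (Pos a) = a"
| "lit_atom (Neg a) = a"

text \<open>A rule  A_1 v ... v A_m <- L_1, ..., L_n.\<close>
datatype 'a rule = Rule (head: "'a list") (body: "'a lit list")

type_synonym ('p, 'f, 'v) program = "('p, 'f, 'v) atm rule set"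

definition disj_program :: "('p, 'f, 'v) program \<Rightarrow> bool" where
  "disj_program P \<longleftrightarrow> (\<forall>r\<in>P. head r \<noteq> [])"

fun trm_vars :: "('f, 'v) trm \<Rightarrow> 'v set" where
  "trm_vars (Var v) = {v}"
| "trm_vars (Fn f ts) = (\<Union>t\<in>set ts. trm_vars t)"

definition ground_trm :: "('f, 'v) trm \<Rightarrow> bool" where
  "ground_trm t \<longleftrightarrow> trm_vars t = {}"

definition ground_atom :: "('p, 'f, 'v) atm \<Rightarrow> bool" where
  "ground_atom A \<longleftrightarrow> (\<forall>t\<in>set (snd A). ground_trm t)"

fun trm_subst :: "('v \<Rightarrow> ('f, 'v) trm) \<Rightarrow> ('f, 'v) trm \<Rightarrow> ('f, 'v) trm" where
  "trm_subst \<sigma> (Var v) = \<sigma> v"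
| "trm_subst \<sigma> (Fn f ts) = Fn f (map (trm_subst \<sigma>) ts)"

definition atm_subst :: "('v \<Rightarrow> ('f, 'v) trm) \<Rightarrow> ('p, 'f, 'v) atm \<Rightarrow> ('p, 'f, 'v) atm" where
  "atm_subst \<sigma> A = (fst A, map (trm_subst \<sigma>) (snd A))"

fun lit_subst :: "('v \<Rightarrow> ('f, 'v) trm) \<Rightarrow> ('p, 'f, 'v) atm lit \<Rightarrow> ('p, 'f, 'v) atm lit" where
  "lit_subst \<sigma> (Pos a) = Pos (atm_subst \<sigma> a)"
| "lit_subst \<sigma> (Neg a) = Neg (atm_subst \<sigma> a)"

definition rule_subst :: "('v \<Rightarrow> ('f, 'v) trm) \<Rightarrow> ('p, 'f, 'v) atm rule \<Rightarrow> ('p, 'f, 'v) atm rule" where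
  "rule_subst \<sigma> r = Rule (map (atm_subst \<sigma>) (head r)) (map (lit_subst \<sigma>) (body r))"

definition ground_subst :: "('v \<Rightarrow> ('f, 'v) trm) \<Rightarrow> bool" where
  "ground_subst \<sigma> \<longleftrightarrow> (\<forall>v. ground_trm (\<sigma> v))"

text \<open>Ground(P): all instances of rules of P by substitutions of ground terms
  (Herbrand universe = all ground terms over the function symbols of type 'f).\<close>
definition Ground :: "('p, 'f, 'v) program \<Rightarrow> ('p, 'f, 'v) program" where
  "Ground P = {rule_subst \<sigma> r | \<sigma> r. r \<in> P \<and> ground_subst \<sigma>}"

definition atoms_of_rule :: "'a rule \<Rightarrow> 'a set" where
  "atoms_of_rule r = set (head r) \<union> lit_atom ` set (body r)"

definition atom_Ground :: "('p, 'f, 'v) program \<Rightarrow> ('p, 'f, 'v) atm set" where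
  "atom_Ground P = (\<Union>r\<in>Ground P. atoms_of_rule r)"

definition dep_edge :: "('p, 'f, 'v) program \<Rightarrow> ('p, 'f, 'v) atm \<Rightarrow> ('p, 'f, 'v) atm \<Rightarrow> bool" where
  "dep_edge P A B \<longleftrightarrow> (\<exists>r\<in>Ground P. A \<in> set (head r) \<and> B \<in> atoms_of_rule r)"

definition depends_on :: "('p, 'f, 'v) program \<Rightarrow> ('p, 'f, 'v) atm \<Rightarrow> ('p, 'f, 'v) atm \<Rightarrow> bool" where
  "depends_on P A B \<longleftrightarrow> (dep_edge P)\<^sup>*\<^sup>* A B"

definition finitely_recursive :: "('p, 'f, 'v) program \<Rightarrow> bool" where
  "finitely_recursive P \<longleftrightarrow>
     (\<forall>A. ground_atom A \<longrightarrow> finite {B. depends_on P A B})"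

definition splitting_set :: "('p, 'f, 'v) program \<Rightarrow> ('p, 'f, 'v) atm set \<Rightarrow> bool" where
  "splitting_set P U \<longleftrightarrow> (\<forall>A\<in>U. ground_atom A) \<and>
     (\<forall>r\<in>Ground P. set (head r) \<inter> U \<noteq> {} \<longrightarrow> atoms_of_rule r \<subseteq> U)"

text \<open>A sequence of length \<mu> \<le> \<omega> is a function on nat, of which only the indices
  n with n < \<mu> matter; \<mu> :: enat, \<omega> = \<infinity>. Continuity is vacuous since there is
  no (nonzero) limit ordinal below \<omega>.\<close>
definition splitting_sequence ::
  "('p, 'f, 'v) program \<Rightarrow> enat \<Rightarrow> (nat \<Rightarrow> ('p, 'f, 'v) atm set) \<Rightarrow> bool" where
  "splitting_sequence P \<mu> U \<longleftrightarrow>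
     (\<forall>n. enat n < \<mu> \<longrightarrow> splitting_set P (U n)) \<and>
     (\<forall>m n. m < n \<and> enat n < \<mu> \<longrightarrow> U m \<subseteq> U n) \<and>
     (\<Union>{U n | n. enat n < \<mu>}) = atom_Ground P"

definition smooth :: "enat \<Rightarrow> (nat \<Rightarrow> 'a set) \<Rightarrow> bool" where
  "smooth \<mu> X \<longleftrightarrow> (0 < \<mu> \<longrightarrow> finite (X 0)) \<and>
     (\<forall>n. enat (Suc n) < \<mu> \<longrightarrow> finite (X (Suc n) - X n))"

end

theory Submission
  imports Defs
begin

text \<open>
  If every ground atom depends on only finitely many atoms, enumerate the (countably many)
  atoms of the ground program as e 0, e 1, ... and let U n be the set of atoms on which
  one of e 0, ..., e n depends. Every set closed under dependency is a splitting set, so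
  this is a smooth splitting sequence of length \<omega>. Conversely, an atom A of a splitting
  sequence lies in some U n; since U n is a splitting set, everything A depends on lies in
  U n as well, and smoothness makes each U n finite. Atoms not occurring in the ground
  program depend only on themselves.
\<close>

instance trm :: (countable, countable) countable
  by countable_datatype

lemma map_trm_vars_ground: "trm_vars t = {} \<Longrightarrow> map_trm id h t = t"
  by (induction t) (auto intro: map_idI)

text \<open>The variable type 'v need not be countable: ground terms are recovered from their
  images in the countable type of terms with variables in unit.\<close>

lemma countable_ground_atoms:
  "countable {A :: ('p::countable, 'f::countable, 'v) atm. ground_atom A}"
proof -
  define erase :: "('f, 'v) trm \<Rightarrow> ('f, unit) trm" where "erase = map_trm id (\<lambda>_. ())"
  define lift :: "('f, unit) trm \<Rightarrow> ('f, 'v) trm" where "lift = map_trm id (\<lambda>_. undefined)"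
  define lift_atm :: "'p \<times> ('f, unit) trm list \<Rightarrow> ('p, 'f, 'v) atm"
    where "lift_atm = (\<lambda>(p, ts). (p, map lift ts))"
  have lift_erase: "lift (erase t) = t" if "ground_trm t" for t
  proof -
    have "lift (erase t) = map_trm id ((\<lambda>_. undefined) \<circ> (\<lambda>_. ())) t"
      by (simp add: lift_def erase_def trm.map_comp)
    with that show ?thesis
      by (simp add: map_trm_vars_ground ground_trm_def)
  qed
  have "{A :: ('p, 'f, 'v) atm. ground_atom A} \<subseteq> range lift_atm"
  proof
    fix A :: "('p, 'f, 'v) atm" assume "A \<in> {A. ground_atom A}"
    then have "(fst A, map lift (map erase (snd A))) = A"
      by (cases A) (auto simp: ground_atom_def lift_erase intro: map_idI)
    then show "A \<in> range lift_atm"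
      by (metis lift_atm_def case_prod_conv rangeI)
  qed
  moreover have "countable (range lift_atm)"
    by (rule countable_image) simp
  ultimately show ?thesis
    by (rule countable_subset)
qed

lemma ground_atom_atoms_of_Ground:
  fixes P :: "('p, 'f, 'v) program"
  assumes "r \<in> Ground P" "A \<in> atoms_of_rule r"
  shows "ground_atom A"
proof -
  obtain \<sigma> r0 where r: "r = rule_subst \<sigma> r0" and \<sigma>: "ground_subst \<sigma>"
    using assms(1) unfolding Ground_def by blast
  have "ground_trm (trm_subst \<sigma> t)" for t
    using \<sigma> by (induction t) (auto simp: ground_trm_def ground_subst_def)
  then have ground_atm: "ground_atom (atm_subst \<sigma> a)" for a :: "('p, 'f, 'v) atm"
    by (auto simp: ground_atom_def atm_subst_def)
  then have "ground_atom (lit_atom (lit_subst \<sigma> l))" for l :: "('p, 'f, 'v) atm lit"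
    by (cases l) auto
  with ground_atm assms(2) show ?thesis
    unfolding r atoms_of_rule_def rule_subst_def by auto
qed

lemma ground_atom_atom_Ground: "A \<in> atom_Ground P \<Longrightarrow> ground_atom A"
  unfolding atom_Ground_def using ground_atom_atoms_of_Ground by blast

lemma countable_atom_Ground:
  "countable (atom_Ground (P :: ('p::countable, 'f::countable, 'v) program))"
  using countable_subset[OF _ countable_ground_atoms] ground_atom_atom_Ground by blast

lemma depends_on_atom_Ground:
  assumes "depends_on P A B" "A \<in> atom_Ground P"
  shows "B \<in> atom_Ground P"
  using assms unfolding depends_on_def
proof (induction rule: rtranclp_induct)
  case (step y z)
  then show ?case
    by (auto simp: dep_edge_def atom_Ground_def)
qed

lemma depends_on_not_atom_Ground:
  assumes "depends_on P A B" "A \<notin> atom_Ground P"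
  shows "B = A"
  using assms unfolding depends_on_def
proof (induction rule: rtranclp_induct)
  case (step y z)
  then have "y \<in> atom_Ground P"
    by (auto simp: dep_edge_def atom_Ground_def atoms_of_rule_def)
  with step show ?case
    by simp
qed simp

lemma splitting_set_depends_on:
  assumes "splitting_set P U" "A \<in> U" "depends_on P A B"
  shows "B \<in> U"
  using assms(3,2) unfolding depends_on_def
proof (induction rule: rtranclp_induct)
  case (step y z)
  with assms(1) show ?case
    by (auto simp: dep_edge_def splitting_set_def)
qed

definition dep_closure :: "('p, 'f, 'v) program \<Rightarrow> ('p, 'f, 'v) atm set \<Rightarrow> ('p, 'f, 'v) atm set"
  where "dep_closure P X = {B. \<exists>A\<in>X. depends_on P A B}"

lemma splitting_set_dep_closure:
  assumes "X \<subseteq> atom_Ground P"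
  shows "splitting_set P (dep_closure P X)"
  unfolding splitting_set_def
proof (intro conjI ballI impI)
  fix B assume "B \<in> dep_closure P X"
  with assms show "ground_atom B"
    by (auto simp: dep_closure_def intro: ground_atom_atom_Ground depends_on_atom_Ground)
next
  fix r assume r: "r \<in> Ground P" "set (head r) \<inter> dep_closure P X \<noteq> {}"
  then obtain A H where A: "A \<in> X" "depends_on P A H" and H: "H \<in> set (head r)"
    by (auto simp: dep_closure_def)
  have "depends_on P A B" if "B \<in> atoms_of_rule r" for B
  proof -
    from r(1) H that have "dep_edge P H B"
      by (auto simp: dep_edge_def)
    with A(2) show ?thesis
      by (simp add: depends_on_def)
  qed
  with A(1) show "atoms_of_rule r \<subseteq> dep_closure P X"
    by (auto simp: dep_closure_def)
qed

lemma finite_dep_closure: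
  assumes "finitely_recursive P" "finite X" "\<forall>A\<in>X. ground_atom A"
  shows "finite (dep_closure P X)"
proof -
  have "dep_closure P X = (\<Union>A\<in>X. {B. depends_on P A B})"
    by (auto simp: dep_closure_def)
  with assms show ?thesis
    by (simp add: finitely_recursive_def del: split_paired_All)
qed

lemma dep_closure_mono: "X \<subseteq> Y \<Longrightarrow> dep_closure P X \<subseteq> dep_closure P Y"
  by (auto simp: dep_closure_def)

lemma dep_closure_UN: "dep_closure P (\<Union>i. X i) = (\<Union>i. dep_closure P (X i))"
  by (auto simp: dep_closure_def)

lemma dep_closure_atom_Ground: "dep_closure P (atom_Ground P) = atom_Ground P"
  by (auto simp: dep_closure_def depends_on_def intro: depends_on_atom_Ground[unfolded depends_on_def])

lemma finite_smooth:
  assumes "smooth \<mu> X" "enat n < \<mu>"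
  shows "finite (X n)"
  using assms(2)
proof (induction n)
  case 0
  with assms(1) show ?case
    by (simp add: smooth_def zero_enat_def)
next
  case (Suc n)
  then have "enat n < \<mu>"
    by (metis Suc_ile_eq order_less_imp_le)
  moreover have "X (Suc n) \<subseteq> X n \<union> (X (Suc n) - X n)"
    by blast
  ultimately show ?case
    using Suc assms(1) finite_subset by (fastforce simp: smooth_def)
qed

lemma finitely_recursive_imp_smooth_splitting_sequence:
  fixes P :: "('p::countable, 'f::countable, 'v) program"
  assumes "finitely_recursive P"
  shows "\<exists>U. splitting_sequence P \<infinity> U \<and> smooth \<infinity> U"
proof -
  let ?S = "atom_Ground P"
  define X where "X n = ?S \<inter> from_nat_into ?S ` {..n}" for n
  define U where "U n = dep_closure P (X n)" for n
  have "(\<Union>n. X n) = ?S"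
  proof
    show "?S \<subseteq> (\<Union>n. X n)"
    proof
      fix A assume "A \<in> ?S"
      moreover obtain n where "from_nat_into ?S n = A"
        using from_nat_into_surj[OF countable_atom_Ground \<open>A \<in> ?S\<close>] ..
      ultimately show "A \<in> (\<Union>n. X n)"
        by (auto simp: X_def)
    qed
  qed (auto simp: X_def)
  then have "(\<Union>n. U n) = ?S"
    unfolding U_def dep_closure_UN[symmetric] by (simp add: dep_closure_atom_Ground)
  moreover have "splitting_set P (U n)" for n
    unfolding U_def by (rule splitting_set_dep_closure) (auto simp: X_def)
  moreover have "U m \<subseteq> U n" if "m < n" for m n
    unfolding U_def X_def using that by (intro dep_closure_mono Int_mono image_mono) auto
  ultimately have "splitting_sequence P \<infinity> U"
    by (simp add: splitting_sequence_def full_SetCompr_eq)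
  moreover have "finite (U n)" for n
    unfolding U_def
    by (rule finite_dep_closure) (auto simp: assms X_def ground_atom_atom_Ground)
  then have "smooth \<infinity> U"
    by (simp add: smooth_def)
  ultimately show ?thesis
    by blast
qed

lemma smooth_splitting_sequence_imp_finitely_recursive:
  fixes P :: "('p, 'f, 'v) program"
  assumes "splitting_sequence P \<mu> U" "smooth \<mu> U"
  shows "finitely_recursive P"
  unfolding finitely_recursive_def
proof (intro allI impI)
  fix A :: "('p, 'f, 'v) atm"
  show "finite {B. depends_on P A B}"
  proof (cases "A \<in> atom_Ground P")
    case False
    then have "{B. depends_on P A B} \<subseteq> {A}"
      using depends_on_not_atom_Ground by blast
    then show ?thesis
      using finite_subset by blast
  next
    case True
    with assms(1) obtain n where n: "enat n < \<mu>" "A \<in> U n"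
      unfolding splitting_sequence_def by blast
    with assms(1) have "{B. depends_on P A B} \<subseteq> U n"
      unfolding splitting_sequence_def by (blast intro: splitting_set_depends_on)
    with finite_smooth[OF assms(2) n(1)] show ?thesis
      using finite_subset by blast
  qed
qed

theorem corollary3p5:
  fixes P :: "('p::countable, 'f::countable, 'v) program"
  assumes "disj_program P"
  shows "finitely_recursive P \<longleftrightarrow>
           (\<exists>(\<mu>::enat) U. splitting_sequence P \<mu> U \<and> smooth \<mu> U)"
proof
  assume "finitely_recursive P"
  then show "\<exists>\<mu> U. splitting_sequence P \<mu> U \<and> smooth \<mu> U"
    by (blast dest: finitely_recursive_imp_smooth_splitting_sequence)
next
  assume "\<exists>\<mu> U. splitting_sequence P \<mu> U \<and> smooth \<mu> U"
  then show "finitely_recursive P"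
    by (blast intro: smooth_splitting_sequence_imp_finitely_recursive)
qed

end
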